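(* For $n=1,2,\dots$ let $\mathcal X^n=(X^n_\sigma)_{\sigma\in\mathcal T}$ be time-homogeneous tree-indexed Markov chains with values in a complete separable metric space $(E,r)$, with associated chains $\mathcal R^n=(R^n_k)_{k\ge0}$, and let $\widetilde R^n_t:=R^n_{[nt]}$. Assume that $\widetilde{\mathcal R}^n\Rightarrow\mathcal R$ as $n\to\infty$ for a càdlàg process $\mathcal R=(R_t)_{t\ge0}$ with state space $E$ and deterministic initial value $R_0=x\in E$. Then: (1) for any $\sigma_1,\dots,\sigma_k\in\mathcal T$, $(X^n_{\sigma_i})_{i=1,\dots,k}\to(x,\dots,x)$ in probability as $n\to\infty$; (2) for fixed $t>0$, if $\Sigma^n_1,\Sigma^n_2$ are two vertices chosen independently and uniformly at random from $\mathcal T_{[nt]}$ (independent of $\mathcal X^n$), then $\big(X^n_{\Sigma^n_1\wedge\Sigma^n_2},X^n_{(\Sigma^n_1\wedge\Sigma^n_2)0},X^n_{(\Sigma^n_1\wedge\Sigma^n_2)1}\big)\to(x,x,x)$ in probability as $n\to\infty$.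
   Context: $\mathcal T=\bigcup_{k\ge0}\mathcal T_k$ is the complete binary tree, $\mathcal T_0=\{\emptyset\}$, $\mathcal T_k=\{0,1\}^k$, children of $\sigma$ are $\sigma0,\sigma1$; $\sigma\le\tau$ means $\sigma$ is a prefix of $\tau$, and $\tau\wedge\tau'$ is the longest common prefix (most recent common ancestor). A time-homogeneous tree-indexed Markov chain with kernel $p$ (from $E$ to $\mathcal B(E^2)$) satisfies: given all $X_\tau$ with $\tau\wedge\sigma\le\sigma$, the pair $(X_{\sigma0},X_{\sigma1})$ has law $p(X_\sigma,\cdot)$. The associated chain $\mathcal R^n$ has $R^n_0=X^n_\emptyset$ and kernel $\tfrac12(p_n(x,A\times E)+p_n(x,E\times A))$; equivalently $\mathcal R^n\stackrel d=(X^n_{\Sigma_k})_{k\ge0}$ for a symmetric random walk $(\Sigma_k)$ down the tree independent of $\mathcal X^n$. $\Rightarrow$ denotes weak convergence of processes. *)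

theory Defs
  imports "HOL-Probability.Probability" "HOL-Library.Sublist"
begin

text \<open>Vertices of the complete binary tree are bit lists; the children of sigma are
  sigma @ [False] (= sigma0) and sigma @ [True] (= sigma1); prefix is the tree order,
  longest_common_prefix is the most recent common ancestor.\<close>

definition past_algebra :: "'a measure \<Rightarrow> (bool list \<Rightarrow> 'a \<Rightarrow> 'e::topological_space) \<Rightarrow> bool list \<Rightarrow> 'a measure" where
  "past_algebra M X \<sigma> = sigma (space M)
     {X \<tau> -` B \<inter> space M | \<tau> B. \<not> strict_prefix \<sigma> \<tau> \<and> B \<in> sets borel}"

definition tree_markov :: "'a measure \<Rightarrow> (bool list \<Rightarrow> 'a \<Rightarrow> 'e::polish_space)
    \<Rightarrow> ('e \<Rightarrow> ('e \<times> 'e) measure) \<Rightarrow> bool" where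
  "tree_markov M X p \<longleftrightarrow>
     prob_space M \<and> (\<forall>\<sigma>. X \<sigma> \<in> borel_measurable M) \<and>
     p \<in> borel \<rightarrow>\<^sub>M prob_algebra borel \<and>
     (\<forall>\<sigma>. \<forall>G \<in> sets (past_algebra M X \<sigma>). \<forall>A \<in> sets borel.
        measure M (G \<inter> {\<omega> \<in> space M. (X (\<sigma> @ [False]) \<omega>, X (\<sigma> @ [True]) \<omega>) \<in> A})
        = (\<integral>\<omega>. indicator G \<omega> * measure (p (X \<sigma> \<omega>)) A \<partial>M))"

text \<open>Symmetric random walk down the tree: driven by i.i.d. fair coins.\<close>
definition coin_measure :: "(nat \<Rightarrow> bool) measure" where
  "coin_measure = PiM UNIV (\<lambda>_. measure_pmf (pmf_of_set (UNIV :: bool set)))"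

definition walk :: "(nat \<Rightarrow> bool) \<Rightarrow> nat \<Rightarrow> bool list" where
  "walk c k = map c [0..<k]"

definition assoc_chain :: "(bool list \<Rightarrow> 'a \<Rightarrow> 'e) \<Rightarrow> 'a \<times> (nat \<Rightarrow> bool) \<Rightarrow> nat \<Rightarrow> 'e" where
  "assoc_chain X = (\<lambda>(\<omega>, c) k. X (walk c k) \<omega>)"

definition rescaled :: "nat \<Rightarrow> ('c \<Rightarrow> nat \<Rightarrow> 'e) \<Rightarrow> 'c \<Rightarrow> real \<Rightarrow> 'e" where
  "rescaled n Y = (\<lambda>z t. Y z (nat \<lfloor>real n * t\<rfloor>))"

definition cadlag :: "(real \<Rightarrow> 'e::topological_space) \<Rightarrow> bool" where
  "cadlag y \<longleftrightarrow> (\<forall>t\<ge>0. continuous (at_right t) y) \<and> (\<forall>t>0. \<exists>l. (y \<longlongrightarrow> l) (at_left t))"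

definition time_changes :: "(real \<Rightarrow> real) set" where
  "time_changes = {l. continuous_on {0..} l \<and> strict_mono_on {0..} l \<and> l ` {0..} = {0..}}"

text \<open>Convergence in the Skorokhod J1 topology of D([0,infinity),E) (Billingsley, Thm 16.2).\<close>
definition skorokhod_conv :: "(nat \<Rightarrow> real \<Rightarrow> 'e::metric_space) \<Rightarrow> (real \<Rightarrow> 'e) \<Rightarrow> bool" where
  "skorokhod_conv ys y \<longleftrightarrow> (\<exists>ls. (\<forall>n. ls n \<in> time_changes) \<and>
     (\<forall>\<epsilon>>0. eventually (\<lambda>n. \<forall>t\<ge>0. \<bar>ls n t - t\<bar> \<le> \<epsilon>) sequentially) \<and>
     (\<forall>T. \<forall>\<epsilon>>0. eventually (\<lambda>n. \<forall>t\<in>{0..T}. dist (ys n (ls n t)) (y t) \<le> \<epsilon>) sequentially))"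

text \<open>Continuity on D (metrizable, so sequential continuity).\<close>
definition skorokhod_continuous :: "((real \<Rightarrow> 'e::metric_space) \<Rightarrow> real) \<Rightarrow> bool" where
  "skorokhod_continuous f \<longleftrightarrow> (\<forall>y ys. cadlag y \<and> (\<forall>n. cadlag (ys n)) \<and> skorokhod_conv ys y
      \<longrightarrow> (\<lambda>n. f (ys n)) \<longlonglongrightarrow> f y)"

definition weak_conv_D :: "(nat \<Rightarrow> 'c measure) \<Rightarrow> (nat \<Rightarrow> 'c \<Rightarrow> real \<Rightarrow> 'e::metric_space)
    \<Rightarrow> 'd measure \<Rightarrow> ('d \<Rightarrow> real \<Rightarrow> 'e) \<Rightarrow> bool" where
  "weak_conv_D P Y Q Z \<longleftrightarrow> (\<forall>f. skorokhod_continuous f \<and> (\<exists>B. \<forall>y. cadlag y \<longrightarrow> \<bar>f y\<bar> \<le> B)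
      \<longrightarrow> (\<lambda>n. \<integral>z. f (Y n z) \<partial>P n) \<longlonglongrightarrow> (\<integral>z. f (Z z) \<partial>Q))"

definition level_unif :: "nat \<Rightarrow> bool list pmf" where
  "level_unif k = pmf_of_set {\<sigma>. length \<sigma> = k}"

end

theory Submission
  imports Defs
begin

text \<open>
  A vertex \<sigma> is the position of the random walk at time |\<sigma>| with probability 2^(-|\<sigma>|),
  independently of the tree, so P(d(X_\<sigma>, x) > \<epsilon>) \<le> 2^|\<sigma>| P(d(R_|\<sigma>|, x) > \<epsilon>) and it
  suffices to show R_m \<rightarrow> x in probability for each fixed m. Weak convergence is tested
  against the bounded Skorokhod-continuous functional F_\<delta> = early_deviation \<delta> x.
  Once m/n \<le> \<delta>/2, Markov's inequality bounds P(d(R_m, x) > \<epsilon>) by a multiple of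
  E F_\<delta>(rescaled chain), which converges to E F_\<delta>(R); the latter is small for small \<delta>
  by right-continuity of R at 0, R_0 = x and dominated convergence.

  For (2): the most recent common ancestor of two independent uniform vertices of level k
  has depth at least J with probability at most 2^(-J); otherwise it and both of its
  children lie in the finite set of vertices of depth at most J + 1, where (1) applies.
\<close>

section \<open>A test functional on the Skorokhod space\<close>

definition ramp :: "real \<Rightarrow> real \<Rightarrow> real" where
  "ramp \<delta> t = max 0 (1 - t / \<delta>)"

definition capped_dist :: "'e::metric_space \<Rightarrow> 'e \<Rightarrow> real" where
  "capped_dist x e = min 1 (dist e x)"

definition early_deviation :: "real \<Rightarrow> 'e::metric_space \<Rightarrow> (real \<Rightarrow> 'e) \<Rightarrow> real" where
  "early_deviation \<delta> x y = (SUP t\<in>{0..}. ramp \<delta> t * capped_dist x (y t))"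

lemma ramp_nonneg: "0 \<le> ramp \<delta> t"
  by (simp add: ramp_def)

lemma ramp_le_1: "\<delta> > 0 \<Longrightarrow> t \<ge> 0 \<Longrightarrow> ramp \<delta> t \<le> 1"
  by (simp add: ramp_def)

lemma ramp_eq_0: "\<delta> > 0 \<Longrightarrow> \<delta> \<le> t \<Longrightarrow> ramp \<delta> t = 0"
  by (simp add: ramp_def)

lemma ramp_antimono: "\<delta> > 0 \<Longrightarrow> s \<le> t \<Longrightarrow> ramp \<delta> t \<le> ramp \<delta> s"
  unfolding ramp_def by (intro max.mono) (auto simp: divide_right_mono)

lemma ramp_lipschitz:
  assumes "\<delta> > 0" shows "\<bar>ramp \<delta> s - ramp \<delta> t\<bar> \<le> \<bar>s - t\<bar> / \<delta>"
proof -
  have "\<bar>ramp \<delta> s - ramp \<delta> t\<bar> \<le> \<bar>(1 - s / \<delta>) - (1 - t / \<delta>)\<bar>"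
    unfolding ramp_def by linarith
  also have "\<dots> = \<bar>s - t\<bar> / \<delta>"
    using assms by (simp add: abs_minus_commute diff_divide_distrib[symmetric])
  finally show ?thesis .
qed

lemma capped_dist_nonneg: "0 \<le> capped_dist x e"
  by (simp add: capped_dist_def)

lemma capped_dist_le_1: "capped_dist x e \<le> 1"
  by (simp add: capped_dist_def)

lemma capped_dist_lipschitz: "\<bar>capped_dist x a - capped_dist x b\<bar> \<le> dist a b"
  unfolding capped_dist_def using dist_triangle2[of a x b] dist_triangle2[of b x a]
  by (simp add: min_def abs_le_iff dist_commute)

lemma ramp_capped_dist_bounds:
  assumes "\<delta> > 0" "t \<ge> 0"
  shows "0 \<le> ramp \<delta> t * capped_dist x e" "ramp \<delta> t * capped_dist x e \<le> 1"
proof -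
  show "0 \<le> ramp \<delta> t * capped_dist x e"
    by (simp add: ramp_nonneg capped_dist_nonneg)
  show "ramp \<delta> t * capped_dist x e \<le> 1"
    by (rule mult_le_one) (simp_all add: ramp_le_1[OF assms] capped_dist_le_1 ramp_nonneg capped_dist_nonneg)
qed

lemma bdd_above_ramp_capped_dist:
  assumes "\<delta> > 0" "\<And>s. s \<in> S \<Longrightarrow> f s \<ge> 0"
  shows "bdd_above ((\<lambda>s. ramp \<delta> (f s) * capped_dist x (y s)) ` S)"
proof (rule bdd_aboveI[where M=1])
  fix r assume "r \<in> (\<lambda>s. ramp \<delta> (f s) * capped_dist x (y s)) ` S"
  then show "r \<le> 1"
    using ramp_capped_dist_bounds(2)[OF assms(1)] assms(2) by blast
qed

lemma bdd_above_early_deviation_terms: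
  "\<delta> > 0 \<Longrightarrow> bdd_above ((\<lambda>t. ramp \<delta> t * capped_dist x (y t)) ` {0..})"
  using bdd_above_ramp_capped_dist[where f="\<lambda>t. t" and S="{0..}"] by simp

lemma early_deviation_ge:
  assumes "\<delta> > 0" "t \<ge> 0"
  shows "ramp \<delta> t * capped_dist x (y t) \<le> early_deviation \<delta> x y"
  unfolding early_deviation_def
  by (rule cSUP_upper) (use assms bdd_above_early_deviation_terms in auto)

lemma early_deviation_nonneg: "\<delta> > 0 \<Longrightarrow> 0 \<le> early_deviation \<delta> x y"
  by (rule order_trans[OF _ early_deviation_ge[of \<delta> 0]]) (simp_all add: ramp_capped_dist_bounds)

lemma early_deviation_le_1: "\<delta> > 0 \<Longrightarrow> early_deviation \<delta> x y \<le> 1"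
  unfolding early_deviation_def by (rule cSUP_least) (auto intro: ramp_capped_dist_bounds)

lemma cSUP_abs_diff_le:
  fixes f g :: "'i \<Rightarrow> real"
  assumes "S \<noteq> {}" "bdd_above (f ` S)" "bdd_above (g ` S)" "\<And>s. s \<in> S \<Longrightarrow> \<bar>f s - g s\<bar> \<le> c"
  shows "\<bar>(SUP s\<in>S. f s) - (SUP s\<in>S. g s)\<bar> \<le> c"
proof -
  have "f s \<le> (SUP s\<in>S. g s) + c" "g s \<le> (SUP s\<in>S. f s) + c" if "s \<in> S" for s
    using cSUP_upper[OF that assms(2)] cSUP_upper[OF that assms(3)] assms(4)[OF that] by linarith+
  then have "(SUP s\<in>S. f s) \<le> (SUP s\<in>S. g s) + c" "(SUP s\<in>S. g s) \<le> (SUP s\<in>S. f s) + c"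
    by (auto intro: cSUP_least[OF assms(1)])
  then show ?thesis by linarith
qed

lemma ramp_capped_dist_perturb:
  assumes "\<delta> > 0" and "t \<ge> 0" and "0 \<le> \<epsilon>" and shift: "\<bar>s - t\<bar> \<le> \<epsilon>"
    and close: "t \<le> \<delta> \<Longrightarrow> dist u v \<le> \<epsilon>"
  shows "\<bar>ramp \<delta> s * capped_dist x u - ramp \<delta> t * capped_dist x v\<bar> \<le> \<epsilon> / \<delta> + \<epsilon>"
proof -
  have "\<bar>(ramp \<delta> s - ramp \<delta> t) * capped_dist x u\<bar> \<le> \<bar>ramp \<delta> s - ramp \<delta> t\<bar>"
    by (simp add: abs_mult abs_of_nonneg[OF capped_dist_nonneg] mult_left_le capped_dist_le_1)
  also have "\<dots> \<le> \<bar>s - t\<bar> / \<delta>"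
    by (rule ramp_lipschitz[OF \<open>\<delta> > 0\<close>])
  also have "\<dots> \<le> \<epsilon> / \<delta>"
    using shift \<open>\<delta> > 0\<close> by (simp add: divide_right_mono)
  finally have time: "\<bar>(ramp \<delta> s - ramp \<delta> t) * capped_dist x u\<bar> \<le> \<epsilon> / \<delta>" .
  have space: "\<bar>ramp \<delta> t * (capped_dist x u - capped_dist x v)\<bar> \<le> \<epsilon>"
  proof (cases "t \<le> \<delta>")
    case True
    have "\<bar>ramp \<delta> t * (capped_dist x u - capped_dist x v)\<bar> \<le> \<bar>capped_dist x u - capped_dist x v\<bar>"
      using ramp_nonneg ramp_le_1[OF \<open>\<delta> > 0\<close> \<open>t \<ge> 0\<close>] by (simp add: abs_mult mult_left_le_one_le)
    also have "\<dots> \<le> dist u v"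
      by (rule capped_dist_lipschitz)
    finally show ?thesis
      using close True by linarith
  next
    case False
    then show ?thesis
      using ramp_eq_0[OF \<open>\<delta> > 0\<close>, of t] \<open>0 \<le> \<epsilon>\<close> by simp
  qed
  have "ramp \<delta> s * capped_dist x u - ramp \<delta> t * capped_dist x v
      = (ramp \<delta> s - ramp \<delta> t) * capped_dist x u + ramp \<delta> t * (capped_dist x u - capped_dist x v)"
    by algebra
  then show ?thesis
    using time space by linarith
qed

lemma early_deviation_time_change:
  assumes "\<delta> > 0" and "l \<in> time_changes" and shift: "\<forall>t\<ge>0. \<bar>l t - t\<bar> \<le> \<epsilon>"
    and close: "\<forall>t\<in>{0..\<delta>}. dist (z (l t)) (y t) \<le> \<epsilon>"
  shows "\<bar>early_deviation \<delta> x z - early_deviation \<delta> x y\<bar> \<le> \<epsilon> / \<delta> + \<epsilon>"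
proof -
  have onto: "l ` {0..} = {0..}"
    using \<open>l \<in> time_changes\<close> by (simp add: time_changes_def)
  have "early_deviation \<delta> x z = (SUP t\<in>l ` {0..}. ramp \<delta> t * capped_dist x (z t))"
    unfolding early_deviation_def onto ..
  also have "\<dots> = (SUP s\<in>{0..}. ramp \<delta> (l s) * capped_dist x (z (l s)))"
    by (simp add: image_comp)
  finally have reparam: "early_deviation \<delta> x z = (SUP s\<in>{0..}. ramp \<delta> (l s) * capped_dist x (z (l s)))" .
  have "0 \<le> \<epsilon>"
    using shift[rule_format, OF order_refl] abs_ge_zero[of "l 0 - 0"] by linarith
  have "\<bar>(SUP s\<in>{0..}. ramp \<delta> (l s) * capped_dist x (z (l s)))
      - (SUP s\<in>{0..}. ramp \<delta> s * capped_dist x (y s))\<bar> \<le> \<epsilon> / \<delta> + \<epsilon>"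
  proof (rule cSUP_abs_diff_le)
    show "bdd_above ((\<lambda>s. ramp \<delta> (l s) * capped_dist x (z (l s))) ` {0..})"
      using onto \<open>\<delta> > 0\<close> by (intro bdd_above_ramp_capped_dist) auto
    show "bdd_above ((\<lambda>s. ramp \<delta> s * capped_dist x (y s)) ` {0..})"
      using \<open>\<delta> > 0\<close> by (rule bdd_above_early_deviation_terms)
    show "\<bar>ramp \<delta> (l s) * capped_dist x (z (l s)) - ramp \<delta> s * capped_dist x (y s)\<bar> \<le> \<epsilon> / \<delta> + \<epsilon>"
      if "s \<in> {0..}" for s
      using that \<open>0 \<le> \<epsilon>\<close> shift close by (intro ramp_capped_dist_perturb[OF \<open>\<delta> > 0\<close>]) auto
  qed auto
  then show ?thesis
    by (simp only: reparam early_deviation_def[of \<delta> x y])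
qed

lemma skorokhod_continuous_early_deviation:
  assumes "\<delta> > 0"
  shows "skorokhod_continuous (early_deviation \<delta> x)"
  unfolding skorokhod_continuous_def
proof (intro allI impI, elim conjE)
  fix y and ys :: "nat \<Rightarrow> real \<Rightarrow> 'a"
  assume "skorokhod_conv ys y"
  then obtain ls where ls: "\<forall>n. ls n \<in> time_changes"
    and shift: "\<forall>\<epsilon>>0. eventually (\<lambda>n. \<forall>t\<ge>0. \<bar>ls n t - t\<bar> \<le> \<epsilon>) sequentially"
    and close: "\<forall>T. \<forall>\<epsilon>>0. eventually (\<lambda>n. \<forall>t\<in>{0..T}. dist (ys n (ls n t)) (y t) \<le> \<epsilon>) sequentially"
    unfolding skorokhod_conv_def by blast
  show "(\<lambda>n. early_deviation \<delta> x (ys n)) \<longlonglongrightarrow> early_deviation \<delta> x y"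
  proof (rule tendstoI)
    fix \<eta> :: real assume "\<eta> > 0"
    define \<epsilon> where "\<epsilon> = min \<delta> 1 * \<eta> / 3"
    have "\<epsilon> > 0" "\<epsilon> / \<delta> + \<epsilon> < \<eta>"
      using \<open>\<delta> > 0\<close> \<open>\<eta> > 0\<close> by (auto simp: \<epsilon>_def field_simps min_def)
    show "eventually (\<lambda>n. dist (early_deviation \<delta> x (ys n)) (early_deviation \<delta> x y) < \<eta>) sequentially"
      using eventually_conj[OF shift[rule_format, OF \<open>\<epsilon> > 0\<close>] close[rule_format, OF \<open>\<epsilon> > 0\<close>, of \<delta>]]
    proof (rule eventually_mono)
      fix n
      assume "(\<forall>t\<ge>0. \<bar>ls n t - t\<bar> \<le> \<epsilon>) \<and> (\<forall>t\<in>{0..\<delta>}. dist (ys n (ls n t)) (y t) \<le> \<epsilon>)"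
      then have "\<bar>early_deviation \<delta> x (ys n) - early_deviation \<delta> x y\<bar> \<le> \<epsilon> / \<delta> + \<epsilon>"
        using early_deviation_time_change[OF \<open>\<delta> > 0\<close> ls[rule_format]] by blast
      then show "dist (early_deviation \<delta> x (ys n)) (early_deviation \<delta> x y) < \<eta>"
        using \<open>\<epsilon> / \<delta> + \<epsilon> < \<eta>\<close> by (simp add: dist_real_def)
    qed
  qed
qed

lemma early_deviation_tendsto_0:
  assumes "cadlag y" and "y 0 = x"
  shows "((\<lambda>\<delta>. early_deviation \<delta> x y) \<longlongrightarrow> 0) (at_right 0)"
proof (rule tendstoI)
  fix \<eta> :: real assume "\<eta> > 0"
  have "(y \<longlongrightarrow> x) (at_right 0)"
    using assms unfolding cadlag_def continuous_within by force
  then have "eventually (\<lambda>t. dist (y t) x < \<eta> / 2) (at_right 0)"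
    using \<open>\<eta> > 0\<close> by (intro tendstoD) simp_all
  then obtain b :: real where "b > 0" and near: "\<And>t. 0 < t \<Longrightarrow> t < b \<Longrightarrow> dist (y t) x < \<eta> / 2"
    unfolding eventually_at_right_field by auto
  have "dist (early_deviation \<delta> x y) 0 < \<eta>" if "0 < \<delta>" "\<delta> < b" for \<delta>
  proof -
    have "ramp \<delta> t * capped_dist x (y t) \<le> \<eta> / 2" if "t \<ge> 0" for t
    proof (cases "t < \<delta>")
      case True
      then have "capped_dist x (y t) \<le> \<eta> / 2"
        using near[of t] \<open>\<delta> < b\<close> \<open>t \<ge> 0\<close> \<open>\<eta> > 0\<close> \<open>y 0 = x\<close>
        by (cases "t = 0") (auto simp: capped_dist_def)
      then show ?thesis
        using ramp_nonneg ramp_le_1[OF \<open>0 < \<delta>\<close> \<open>t \<ge> 0\<close>] capped_dist_nonneg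
        by (meson mult_left_le_one_le order_trans)
    next
      case False
      then show ?thesis
        using ramp_eq_0[OF \<open>0 < \<delta>\<close>, of t] \<open>\<eta> > 0\<close> by simp
    qed
    then have "early_deviation \<delta> x y \<le> \<eta> / 2"
      unfolding early_deviation_def by (intro cSUP_least) auto
    then show ?thesis
      using early_deviation_nonneg[OF \<open>0 < \<delta>\<close>, of x y] \<open>\<eta> > 0\<close> by (simp add: dist_real_def)
  qed
  then show "eventually (\<lambda>\<delta>. dist (early_deviation \<delta> x y) 0 < \<eta>) (at_right 0)"
    unfolding eventually_at_right_field using \<open>b > 0\<close> by blast
qed

lemma integral_early_deviation_small:
  assumes "prob_space N" and cadlag: "\<And>\<omega>. \<omega> \<in> space N \<Longrightarrow> cadlag (R \<omega>)"
    and start: "AE \<omega> in N. R \<omega> 0 = x" and "\<eta> > 0"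
  shows "\<exists>\<delta>>0. (\<integral>\<omega>. early_deviation \<delta> x (R \<omega>) \<partial>N) < \<eta>"
proof (cases "\<forall>\<delta>>0. integrable N (\<lambda>\<omega>. early_deviation \<delta> x (R \<omega>))")
  case False
  \<comment> \<open>A non-integrable function has Bochner integral 0.\<close>
  then show ?thesis
    using not_integrable_integral_eq \<open>\<eta> > 0\<close> by fastforce
next
  case True
  interpret N: prob_space N by fact
  let ?\<delta> = "\<lambda>j::nat. inverse (real (Suc j))"
  have "filterlim ?\<delta> (at_right 0) sequentially"
    by (rule tendsto_imp_filterlim_at_right[OF LIMSEQ_inverse_real_of_nat]) simp
  have "(\<lambda>j. \<integral>\<omega>. early_deviation (?\<delta> j) x (R \<omega>) \<partial>N) \<longlonglongrightarrow> (\<integral>\<omega>. 0 \<partial>N)"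
  proof (rule integral_dominated_convergence[where w="\<lambda>_. 1"])
    show "(\<lambda>\<omega>. early_deviation (?\<delta> j) x (R \<omega>)) \<in> borel_measurable N" for j
      using True by (simp add: borel_measurable_integrable)
    show "AE \<omega> in N. (\<lambda>j. early_deviation (?\<delta> j) x (R \<omega>)) \<longlonglongrightarrow> 0"
      using start
    proof (rule AE_mp, intro AE_I2 impI)
      fix \<omega> assume "\<omega> \<in> space N" "R \<omega> 0 = x"
      then show "(\<lambda>j. early_deviation (?\<delta> j) x (R \<omega>)) \<longlonglongrightarrow> 0"
        using filterlim_compose[OF early_deviation_tendsto_0 \<open>filterlim ?\<delta> (at_right 0) sequentially\<close>]
          cadlag by blast
    qed
    show "AE \<omega> in N. norm (early_deviation (?\<delta> j) x (R \<omega>)) \<le> 1" for j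
    proof (rule AE_I2)
      fix \<omega>
      have "0 \<le> early_deviation (?\<delta> j) x (R \<omega>)" "early_deviation (?\<delta> j) x (R \<omega>) \<le> 1"
        by (simp_all add: early_deviation_nonneg early_deviation_le_1 del: of_nat_Suc)
      then show "norm (early_deviation (?\<delta> j) x (R \<omega>)) \<le> 1"
        by simp
    qed
  qed simp_all
  then have "eventually (\<lambda>j. (\<integral>\<omega>. early_deviation (?\<delta> j) x (R \<omega>) \<partial>N) < \<eta>) sequentially"
    using \<open>\<eta> > 0\<close> by (intro order_tendstoD(2)) simp_all
  then obtain j where "(\<integral>\<omega>. early_deviation (?\<delta> j) x (R \<omega>) \<partial>N) < \<eta>"
    by (auto simp: eventually_sequentially)
  then show ?thesis
    by (intro exI[of _ "?\<delta> j"]) simp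
qed

section \<open>The random walk down the tree\<close>

lemma measure_pair_measure_Times:
  assumes "sigma_finite_measure N" and "A \<in> sets M" and "B \<in> sets N"
  shows "measure (M \<Otimes>\<^sub>M N) (A \<times> B) = measure M A * measure N B"
  using sigma_finite_measure.emeasure_pair_measure_Times[OF assms] by (simp add: measure_def enn2real_mult)

lemma prob_space_coin_measure: "prob_space coin_measure"
  unfolding coin_measure_def by (rule prob_space_PiM) (rule prob_space_measure_pmf)

lemma space_coin_measure: "space coin_measure = UNIV"
  by (simp add: coin_measure_def space_PiM)

lemma measurable_walk: "(\<lambda>c. walk c k) \<in> coin_measure \<rightarrow>\<^sub>M count_space UNIV"
proof (induction k)
  case 0
  then show ?case by (simp add: walk_def)
next
  case (Suc k)
  have "(\<lambda>c. c k) \<in> coin_measure \<rightarrow>\<^sub>M measure_pmf (pmf_of_set UNIV)"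
    unfolding coin_measure_def by (rule measurable_component_singleton) simp
  then have "(\<lambda>c. \<sigma> @ [c k]) \<in> coin_measure \<rightarrow>\<^sub>M count_space UNIV" for \<sigma>
    by (rule measurable_compose) simp
  then have "(\<lambda>c. walk c k @ [c k]) \<in> coin_measure \<rightarrow>\<^sub>M count_space UNIV"
    by (rule measurable_compose_countable[where f="\<lambda>\<sigma> c. \<sigma> @ [c k]", OF _ Suc.IH])
  then show ?case
    by (simp add: walk_def)
qed

lemma borel_measurable_along_walk:
  assumes "\<And>\<sigma>. Y \<sigma> \<in> borel_measurable M"
  shows "(\<lambda>z. Y (walk (snd z) k) (fst z)) \<in> borel_measurable (M \<Otimes>\<^sub>M coin_measure)"
proof (rule measurable_compose_countable[where f="\<lambda>\<sigma> z. Y \<sigma> (fst z)"])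
  show "(\<lambda>z. Y \<sigma> (fst z)) \<in> borel_measurable (M \<Otimes>\<^sub>M coin_measure)" for \<sigma>
    by (rule measurable_compose[OF measurable_fst assms])
  show "(\<lambda>z. walk (snd z) k) \<in> M \<Otimes>\<^sub>M coin_measure \<rightarrow>\<^sub>M count_space UNIV"
    by (rule measurable_compose[OF measurable_snd measurable_walk])
qed

lemma walk_eq_iff: "length \<sigma> = k \<Longrightarrow> walk c k = \<sigma> \<longleftrightarrow> (\<forall>i<k. c i = \<sigma> ! i)"
  by (auto simp: walk_def list_eq_iff_nth_eq)

lemma prob_walk_eq:
  assumes "length \<sigma> = k"
  shows "measure coin_measure {c. walk c k = \<sigma>} = (1/2) ^ k"
proof -
  let ?coin = "\<lambda>_::nat. measure_pmf (pmf_of_set (UNIV :: bool set))"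
  have "{c. walk c k = \<sigma>} = prod_emb UNIV ?coin {..<k} (Pi\<^sub>E {..<k} (\<lambda>i. {\<sigma> ! i}))"
    using assms by (simp add: prod_emb_def space_PiM restrict_PiE_iff walk_eq_iff set_eq_iff Pi_iff) blast
  then have "emeasure coin_measure {c. walk c k = \<sigma>} = (\<Prod>i<k. emeasure (?coin i) {\<sigma> ! i})"
    unfolding coin_measure_def
    by (simp only:) (rule emeasure_PiM_emb, simp_all add: prob_space_measure_pmf)
  also have "\<dots> = (\<Prod>i<k. ennreal (1/2))"
    by (simp add: emeasure_pmf_single)
  also have "\<dots> = ennreal ((1/2) ^ k)"
    by (simp only: prod_constant card_lessThan ennreal_power[symmetric])
  finally show ?thesis
    by (simp add: measure_def)
qed

lemma prob_deviation_le_along_walk: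
  fixes Y :: "bool list \<Rightarrow> 'a \<Rightarrow> 'e::polish_space"
  assumes "prob_space M" and Y: "\<And>\<sigma>. Y \<sigma> \<in> borel_measurable M"
  shows "measure M {\<omega> \<in> space M. dist (Y \<sigma> \<omega>) x > \<epsilon>}
    \<le> 2 ^ length \<sigma> * measure (M \<Otimes>\<^sub>M coin_measure)
         {z \<in> space (M \<Otimes>\<^sub>M coin_measure). dist (Y (walk (snd z) (length \<sigma>)) (fst z)) x > \<epsilon>}"
proof -
  interpret prob_space "M \<Otimes>\<^sub>M coin_measure"
    by (rule prob_space_pair[OF assms(1) prob_space_coin_measure])
  let ?k = "length \<sigma>"
  define A where "A = {\<omega> \<in> space M. dist (Y \<sigma> \<omega>) x > \<epsilon>}"
  define C where "C = {c. walk c ?k = \<sigma>}"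
  define E where "E = {z \<in> space (M \<Otimes>\<^sub>M coin_measure). dist (Y (walk (snd z) ?k) (fst z)) x > \<epsilon>}"
  have [measurable]: "(\<lambda>z. Y (walk (snd z) ?k) (fst z)) \<in> borel_measurable (M \<Otimes>\<^sub>M coin_measure)"
    by (rule borel_measurable_along_walk[OF Y])
  have "A \<in> sets M"
    using Y unfolding A_def by measurable
  moreover have "C \<in> sets coin_measure"
    using measurable_sets[OF measurable_walk, of "{\<sigma>}" ?k] by (simp add: C_def space_coin_measure vimage_def)
  ultimately have "measure (M \<Otimes>\<^sub>M coin_measure) (A \<times> C) = measure M A * measure coin_measure C"
    by (rule measure_pair_measure_Times[OF prob_space_imp_sigma_finite[OF prob_space_coin_measure]])
  then have "measure M A * (1/2) ^ ?k = measure (M \<Otimes>\<^sub>M coin_measure) (A \<times> C)"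
    using prob_walk_eq[of \<sigma>] by (simp add: C_def)
  also have "\<dots> \<le> measure (M \<Otimes>\<^sub>M coin_measure) E"
  proof (rule finite_measure_mono)
    show "A \<times> C \<subseteq> E"
      by (clarsimp simp: A_def C_def E_def space_pair_measure space_coin_measure)
    show "E \<in> sets (M \<Otimes>\<^sub>M coin_measure)"
      unfolding E_def by measurable
  qed
  finally show ?thesis
    by (simp add: A_def E_def power_one_over pos_divide_le_eq mult.commute)
qed

lemma rescaled_assoc_chain:
  "rescaled n (assoc_chain Y) z t = Y (walk (snd z) (nat \<lfloor>real n * t\<rfloor>)) (fst z)"
  by (cases z) (simp add: rescaled_def assoc_chain_def)

lemma rescaled_assoc_chain_grid:
  "n \<ge> 1 \<Longrightarrow> rescaled n (assoc_chain Y) z (real k / real n) = Y (walk (snd z) k) (fst z)"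
  by (simp add: rescaled_assoc_chain)

lemma early_deviation_rescaled:
  assumes "n \<ge> 1" and "\<delta> > 0"
  shows "early_deviation \<delta> x (rescaled n (assoc_chain Y) z)
       = (SUP k. ramp \<delta> (real k / real n) * capped_dist x (Y (walk (snd z) k) (fst z)))"
    (is "_ = (SUP k. ?grid k)")
proof (rule antisym)
  have bdd: "bdd_above (range ?grid)"
    using \<open>\<delta> > 0\<close> by (intro bdd_above_ramp_capped_dist divide_nonneg_nonneg) simp_all
  show "early_deviation \<delta> x (rescaled n (assoc_chain Y) z) \<le> (SUP k. ?grid k)"
    unfolding early_deviation_def
  proof (rule cSUP_least)
    fix t :: real assume "t \<in> {0..}"
    define k where "k = nat \<lfloor>real n * t\<rfloor>"
    have "real k \<le> real n * t"
      using \<open>t \<in> {0..}\<close> by (simp add: k_def)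
    then have "real k / real n \<le> t"
      using \<open>n \<ge> 1\<close> by (simp add: divide_le_eq mult.commute)
    then have "ramp \<delta> t \<le> ramp \<delta> (real k / real n)"
      by (rule ramp_antimono[OF \<open>\<delta> > 0\<close>])
    then have "ramp \<delta> t * capped_dist x (rescaled n (assoc_chain Y) z t) \<le> ?grid k"
      unfolding rescaled_assoc_chain k_def[symmetric] by (rule mult_right_mono) (rule capped_dist_nonneg)
    also have "\<dots> \<le> (SUP k. ?grid k)"
      by (rule cSUP_upper[OF _ bdd]) simp
    finally show "ramp \<delta> t * capped_dist x (rescaled n (assoc_chain Y) z t) \<le> (SUP k. ?grid k)" .
  qed simp
  show "(SUP k. ?grid k) \<le> early_deviation \<delta> x (rescaled n (assoc_chain Y) z)"
  proof (rule cSUP_least)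
    fix k
    show "?grid k \<le> early_deviation \<delta> x (rescaled n (assoc_chain Y) z)"
      using early_deviation_ge[OF \<open>\<delta> > 0\<close>, of "real k / real n" x "rescaled n (assoc_chain Y) z"]
      by (simp add: rescaled_assoc_chain_grid[OF \<open>n \<ge> 1\<close>])
  qed simp
qed

lemma borel_measurable_early_deviation_rescaled:
  fixes Y :: "bool list \<Rightarrow> 'a \<Rightarrow> 'e::polish_space"
  assumes "n \<ge> 1" and "\<delta> > 0" and Y: "\<And>\<sigma>. Y \<sigma> \<in> borel_measurable M"
  shows "(\<lambda>z. early_deviation \<delta> x (rescaled n (assoc_chain Y) z)) \<in> borel_measurable (M \<Otimes>\<^sub>M coin_measure)"
proof -
  have "(\<lambda>z. SUP k. ramp \<delta> (real k / real n) * capped_dist x (Y (walk (snd z) k) (fst z)))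
      \<in> borel_measurable (M \<Otimes>\<^sub>M coin_measure)"
  proof (rule borel_measurable_cSUP)
    fix k
    have [measurable]: "(\<lambda>z. Y (walk (snd z) k) (fst z)) \<in> borel_measurable (M \<Otimes>\<^sub>M coin_measure)"
      by (rule borel_measurable_along_walk[OF Y])
    show "(\<lambda>z. ramp \<delta> (real k / real n) * capped_dist x (Y (walk (snd z) k) (fst z)))
        \<in> borel_measurable (M \<Otimes>\<^sub>M coin_measure)"
      unfolding capped_dist_def by measurable
  next
    show "bdd_above (range (\<lambda>k. ramp \<delta> (real k / real n) * capped_dist x (Y (walk (snd z) k) (fst z))))"
      for z using \<open>\<delta> > 0\<close> by (intro bdd_above_ramp_capped_dist divide_nonneg_nonneg) simp_all
  qed simp
  then show ?thesis
    by (simp add: early_deviation_rescaled[OF assms(1,2)])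
qed

lemma capped_dist_along_walk_le_early_deviation:
  assumes "n \<ge> 1" and "\<delta> > 0" and "2 * real m \<le> \<delta> * real n"
  shows "capped_dist x (Y (walk (snd z) m) (fst z)) \<le> 2 * early_deviation \<delta> x (rescaled n (assoc_chain Y) z)"
proof -
  have "1/2 \<le> ramp \<delta> (real m / real n)"
    using assms by (simp add: ramp_def field_simps)
  then have "1/2 * capped_dist x (Y (walk (snd z) m) (fst z))
      \<le> ramp \<delta> (real m / real n) * capped_dist x (Y (walk (snd z) m) (fst z))"
    by (rule mult_right_mono) (rule capped_dist_nonneg)
  moreover have "ramp \<delta> (real m / real n) * capped_dist x (Y (walk (snd z) m) (fst z))
      \<le> early_deviation \<delta> x (rescaled n (assoc_chain Y) z)"
    using early_deviation_ge[OF \<open>\<delta> > 0\<close>, of "real m / real n" x "rescaled n (assoc_chain Y) z"]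
    by (simp add: rescaled_assoc_chain_grid[OF \<open>n \<ge> 1\<close>])
  ultimately show ?thesis
    by linarith
qed

lemma prob_walk_deviation_le:
  fixes Y :: "bool list \<Rightarrow> 'a \<Rightarrow> 'e::polish_space"
  assumes "prob_space M" and Y: "\<And>\<sigma>. Y \<sigma> \<in> borel_measurable M"
    and "n \<ge> 1" and "\<delta> > 0" and "2 * real m \<le> \<delta> * real n" and "\<epsilon> > 0"
  shows "measure (M \<Otimes>\<^sub>M coin_measure)
           {z \<in> space (M \<Otimes>\<^sub>M coin_measure). dist (Y (walk (snd z) m) (fst z)) x > \<epsilon>}
    \<le> 2 / min 1 \<epsilon> * (\<integral>z. early_deviation \<delta> x (rescaled n (assoc_chain Y) z) \<partial>(M \<Otimes>\<^sub>M coin_measure))"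
proof -
  interpret prob_space "M \<Otimes>\<^sub>M coin_measure"
    by (rule prob_space_pair[OF assms(1) prob_space_coin_measure])
  let ?u = "\<lambda>z. early_deviation \<delta> x (rescaled n (assoc_chain Y) z)"
  have [measurable]: "?u \<in> borel_measurable (M \<Otimes>\<^sub>M coin_measure)"
    by (rule borel_measurable_early_deviation_rescaled[OF \<open>n \<ge> 1\<close> \<open>\<delta> > 0\<close> Y])
  have "integrable (M \<Otimes>\<^sub>M coin_measure) ?u"
    by (rule integrable_const_bound[where B=1])
       (simp_all add: early_deviation_nonneg early_deviation_le_1 \<open>\<delta> > 0\<close> abs_of_nonneg)
  have "{z \<in> space (M \<Otimes>\<^sub>M coin_measure). dist (Y (walk (snd z) m) (fst z)) x > \<epsilon>}
      \<subseteq> {z \<in> space (M \<Otimes>\<^sub>M coin_measure). ?u z \<ge> min 1 \<epsilon> / 2}"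
  proof safe
    fix z assume "dist (Y (walk (snd z) m) (fst z)) x > \<epsilon>"
    then have "min 1 \<epsilon> \<le> capped_dist x (Y (walk (snd z) m) (fst z))"
      by (simp add: capped_dist_def)
    then show "min 1 \<epsilon> / 2 \<le> ?u z"
      using capped_dist_along_walk_le_early_deviation[OF assms(3-5), of x Y z] by linarith
  qed
  then have "measure (M \<Otimes>\<^sub>M coin_measure)
        {z \<in> space (M \<Otimes>\<^sub>M coin_measure). dist (Y (walk (snd z) m) (fst z)) x > \<epsilon>}
      \<le> measure (M \<Otimes>\<^sub>M coin_measure) {z \<in> space (M \<Otimes>\<^sub>M coin_measure). ?u z \<ge> min 1 \<epsilon> / 2}"
    by (intro finite_measure_mono) measurable
  also have "\<dots> \<le> (\<integral>z. ?u z \<partial>(M \<Otimes>\<^sub>M coin_measure)) / (min 1 \<epsilon> / 2)"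
    by (rule integral_Markov_inequality_measure[OF \<open>integrable _ ?u\<close>, where A="space (M \<Otimes>\<^sub>M coin_measure)"])
       (simp_all add: early_deviation_nonneg \<open>\<delta> > 0\<close> \<open>\<epsilon> > 0\<close>)
  finally show ?thesis
    by (simp add: field_simps)
qed

lemma tendsto_integral_early_deviation:
  assumes "weak_conv_D P Y Q Z" and "\<delta> > 0"
  shows "(\<lambda>n. \<integral>z. early_deviation \<delta> x (Y n z) \<partial>P n) \<longlonglongrightarrow> (\<integral>z. early_deviation \<delta> x (Z z) \<partial>Q)"
proof -
  have "\<bar>early_deviation \<delta> x y\<bar> \<le> 1" for y
    using early_deviation_nonneg[OF \<open>\<delta> > 0\<close>, of x y] early_deviation_le_1[OF \<open>\<delta> > 0\<close>, of x y]
    by (simp add: abs_le_iff)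
  then show ?thesis
    using assms skorokhod_continuous_early_deviation[OF \<open>\<delta> > 0\<close>] unfolding weak_conv_D_def by blast
qed

lemma walk_deviation_tendsto_0:
  fixes X :: "nat \<Rightarrow> bool list \<Rightarrow> 'a \<Rightarrow> 'e::polish_space"
  assumes M: "\<And>n. n \<ge> 1 \<Longrightarrow> prob_space (M n)"
    and X: "\<And>n \<sigma>. n \<ge> 1 \<Longrightarrow> X n \<sigma> \<in> borel_measurable (M n)"
    and "prob_space N" and "\<And>\<omega>. \<omega> \<in> space N \<Longrightarrow> cadlag (R \<omega>)" and "AE \<omega> in N. R \<omega> 0 = x"
    and conv: "weak_conv_D (\<lambda>n. M n \<Otimes>\<^sub>M coin_measure) (\<lambda>n. rescaled n (assoc_chain (X n))) N R"
    and "\<epsilon> > 0"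
  shows "(\<lambda>n. measure (M n \<Otimes>\<^sub>M coin_measure)
           {z \<in> space (M n \<Otimes>\<^sub>M coin_measure). dist (X n (walk (snd z) m) (fst z)) x > \<epsilon>}) \<longlonglongrightarrow> 0"
proof (rule tendstoI)
  fix \<eta> :: real assume "\<eta> > 0"
  define c where "c = 2 / min 1 \<epsilon>"
  have "c > 0"
    using \<open>\<epsilon> > 0\<close> by (simp add: c_def)
  obtain \<delta> where "\<delta> > 0" and small: "(\<integral>\<omega>. early_deviation \<delta> x (R \<omega>) \<partial>N) < \<eta> / c"
    using integral_early_deviation_small[OF assms(3-5)] \<open>\<eta> > 0\<close> \<open>c > 0\<close> by (meson divide_pos_pos)
  have "eventually (\<lambda>n. (\<integral>z. early_deviation \<delta> x (rescaled n (assoc_chain (X n)) z)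
      \<partial>(M n \<Otimes>\<^sub>M coin_measure)) < \<eta> / c) sequentially"
    using tendsto_integral_early_deviation[OF conv \<open>\<delta> > 0\<close>] small by (rule order_tendstoD(2))
  moreover have "eventually (\<lambda>n. 2 * real m / \<delta> \<le> real n) sequentially"
    using filterlim_real_sequentially by (simp add: filterlim_at_top)
  moreover have "eventually (\<lambda>n. n \<ge> 1) sequentially"
    by (rule eventually_ge_at_top)
  ultimately show "eventually (\<lambda>n. dist (measure (M n \<Otimes>\<^sub>M coin_measure)
      {z \<in> space (M n \<Otimes>\<^sub>M coin_measure). dist (X n (walk (snd z) m) (fst z)) x > \<epsilon>}) 0 < \<eta>) sequentially"
  proof eventually_elim
    case (elim n)
    then have "2 * real m \<le> \<delta> * real n"
      using \<open>\<delta> > 0\<close> by (simp add: pos_divide_le_eq mult.commute)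
    then have "measure (M n \<Otimes>\<^sub>M coin_measure)
        {z \<in> space (M n \<Otimes>\<^sub>M coin_measure). dist (X n (walk (snd z) m) (fst z)) x > \<epsilon>}
      \<le> c * (\<integral>z. early_deviation \<delta> x (rescaled n (assoc_chain (X n)) z) \<partial>(M n \<Otimes>\<^sub>M coin_measure))"
      unfolding c_def using elim M X \<open>\<delta> > 0\<close> \<open>\<epsilon> > 0\<close> by (intro prob_walk_deviation_le) simp_all
    also have "\<dots> < c * (\<eta> / c)"
      using elim \<open>c > 0\<close> by (intro mult_strict_left_mono) auto
    also have "\<dots> = \<eta>"
      using \<open>c > 0\<close> by simp
    finally show ?case
      by simp
  qed
qed

lemma vertex_deviation_tendsto_0:
  fixes X :: "nat \<Rightarrow> bool list \<Rightarrow> 'a \<Rightarrow> 'e::polish_space"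
  assumes M: "\<And>n. n \<ge> 1 \<Longrightarrow> prob_space (M n)"
    and X: "\<And>n \<sigma>. n \<ge> 1 \<Longrightarrow> X n \<sigma> \<in> borel_measurable (M n)"
    and "prob_space N" and "\<And>\<omega>. \<omega> \<in> space N \<Longrightarrow> cadlag (R \<omega>)" and "AE \<omega> in N. R \<omega> 0 = x"
    and "weak_conv_D (\<lambda>n. M n \<Otimes>\<^sub>M coin_measure) (\<lambda>n. rescaled n (assoc_chain (X n))) N R"
    and "\<epsilon> > 0"
  shows "(\<lambda>n. measure (M n) {\<omega> \<in> space (M n). \<exists>\<sigma>\<in>set ss. dist (X n \<sigma> \<omega>) x > \<epsilon>}) \<longlonglongrightarrow> 0"
proof (rule tendsto_sandwich[OF _ _ tendsto_const])
  let ?walk_dev = "\<lambda>n \<sigma>. measure (M n \<Otimes>\<^sub>M coin_measure)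
    {z \<in> space (M n \<Otimes>\<^sub>M coin_measure). dist (X n (walk (snd z) (length \<sigma>)) (fst z)) x > \<epsilon>}"
  show "eventually (\<lambda>n. 0 \<le> measure (M n) {\<omega> \<in> space (M n). \<exists>\<sigma>\<in>set ss. dist (X n \<sigma> \<omega>) x > \<epsilon>}) sequentially"
    by simp
  show "eventually (\<lambda>n. measure (M n) {\<omega> \<in> space (M n). \<exists>\<sigma>\<in>set ss. dist (X n \<sigma> \<omega>) x > \<epsilon>}
      \<le> (\<Sum>\<sigma>\<in>set ss. 2 ^ length \<sigma> * ?walk_dev n \<sigma>)) sequentially"
    using eventually_ge_at_top[of 1]
  proof eventually_elim
    case (elim n)
    interpret prob_space "M n"
      using M elim .
    have [measurable]: "X n \<sigma> \<in> borel_measurable (M n)" for \<sigma>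
      using X elim .
    have "measure (M n) {\<omega> \<in> space (M n). \<exists>\<sigma>\<in>set ss. dist (X n \<sigma> \<omega>) x > \<epsilon>}
        = measure (M n) (\<Union>\<sigma>\<in>set ss. {\<omega> \<in> space (M n). dist (X n \<sigma> \<omega>) x > \<epsilon>})"
      by (rule arg_cong[where f="measure (M n)"]) auto
    also have "\<dots> \<le> (\<Sum>\<sigma>\<in>set ss. measure (M n) {\<omega> \<in> space (M n). dist (X n \<sigma> \<omega>) x > \<epsilon>})"
    proof (rule finite_measure_subadditive_finite)
      have "{\<omega> \<in> space (M n). dist (X n \<sigma> \<omega>) x > \<epsilon>} \<in> events" for \<sigma>
        by measurable
      then show "(\<lambda>\<sigma>. {\<omega> \<in> space (M n). dist (X n \<sigma> \<omega>) x > \<epsilon>}) ` set ss \<subseteq> events"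
        by blast
    qed simp
    also have "\<dots> \<le> (\<Sum>\<sigma>\<in>set ss. 2 ^ length \<sigma> * ?walk_dev n \<sigma>)"
      by (intro sum_mono prob_deviation_le_along_walk prob_space_axioms) measurable
    finally show ?case .
  qed
  have "(\<lambda>n. \<Sum>\<sigma>\<in>set ss. 2 ^ length \<sigma> * ?walk_dev n \<sigma>) \<longlonglongrightarrow> (\<Sum>\<sigma>\<in>set ss. 2 ^ length \<sigma> * 0)"
    using walk_deviation_tendsto_0[OF assms] by (intro tendsto_sum tendsto_mult tendsto_const)
  then show "(\<lambda>n. \<Sum>\<sigma>\<in>set ss. 2 ^ length \<sigma> * ?walk_dev n \<sigma>) \<longlonglongrightarrow> 0"
    by simp
qed

section \<open>Most recent common ancestors of uniform vertices\<close>

lemma card_level: "card {\<sigma> :: bool list. length \<sigma> = k} = 2 ^ k"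
  using card_lists_length_eq[of "UNIV :: bool set" k] by simp

lemma finite_level: "finite {\<sigma> :: bool list. length \<sigma> = k}"
  using finite_lists_length_eq[of "UNIV :: bool set" k] by simp

lemma card_level_prefix:
  assumes "length \<tau> \<le> k"
  shows "card {\<sigma> :: bool list. length \<sigma> = k \<and> prefix \<tau> \<sigma>} = 2 ^ (k - length \<tau>)"
proof -
  have "{\<sigma> :: bool list. length \<sigma> = k \<and> prefix \<tau> \<sigma>} = (\<lambda>u. \<tau> @ u) ` {u. length u = k - length \<tau>}"
    using assms by (auto simp: prefix_def)
  then show ?thesis
    by (simp add: card_image inj_on_def card_level)
qed

lemma level_nonempty: "{\<sigma> :: bool list. length \<sigma> = k} \<noteq> {}"
  using length_replicate[of k True] by blast

lemma set_level_unif: "set_pmf (level_unif k) = {\<sigma>. length \<sigma> = k}"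
  unfolding level_unif_def by (rule set_pmf_of_set[OF level_nonempty finite_level])

lemma prob_level_unif_prefix_le:
  "measure_pmf.prob (level_unif k) {\<sigma>. prefix \<tau> \<sigma>} \<le> (1/2) ^ length \<tau>"
proof (cases "length \<tau> \<le> k")
  case True
  have "measure_pmf.prob (level_unif k) {\<sigma>. prefix \<tau> \<sigma>}
      = card {\<sigma> :: bool list. length \<sigma> = k \<and> prefix \<tau> \<sigma>} / card {\<sigma> :: bool list. length \<sigma> = k}"
    unfolding level_unif_def
    by (simp add: measure_pmf_of_set[OF level_nonempty finite_level] Int_def conj_commute)
  also have "\<dots> = 2 ^ (k - length \<tau>) / 2 ^ k"
    using True by (simp add: card_level_prefix card_level)
  also have "\<dots> = (1/2) ^ length \<tau>"
    using True by (simp add: power_diff power_one_over)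
  finally show ?thesis
    by simp
next
  case False
  then have "set_pmf (level_unif k) \<inter> {\<sigma>. prefix \<tau> \<sigma>} = {}"
    by (auto simp: set_level_unif dest: prefix_length_le)
  then show ?thesis
    by (simp add: measure_pmf_zero_iff[THEN iffD2])
qed

lemma prob_lcp_length_ge_le:
  "measure_pmf.prob (pair_pmf (level_unif k) (level_unif k))
     {s. J \<le> length (longest_common_prefix (fst s) (snd s))} \<le> (1/2) ^ J"
proof -
  let ?Q = "pair_pmf (level_unif k) (level_unif k)"
  let ?below = "\<lambda>\<tau>. {\<sigma> :: bool list. prefix \<tau> \<sigma>}"
  have "{s. J \<le> length (longest_common_prefix (fst s) (snd s))}
      \<subseteq> (\<Union>\<tau>\<in>{\<tau>. length \<tau> = J}. ?below \<tau> \<times> ?below \<tau>)"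
  proof clarify
    fix a b :: "bool list"
    assume "J \<le> length (longest_common_prefix (fst (a, b)) (snd (a, b)))"
    moreover have "prefix (take J (longest_common_prefix a b)) a" "prefix (take J (longest_common_prefix a b)) b"
      using take_is_prefix longest_common_prefix_prefix1 longest_common_prefix_prefix2
        prefix_order.trans by blast+
    ultimately show "(a, b) \<in> (\<Union>\<tau>\<in>{\<tau>. length \<tau> = J}. ?below \<tau> \<times> ?below \<tau>)"
      by (simp, intro exI[of _ "take J (longest_common_prefix a b)"]) (simp add: min_absorb2)
  qed
  then have "measure_pmf.prob ?Q {s. J \<le> length (longest_common_prefix (fst s) (snd s))}
      \<le> measure_pmf.prob ?Q (\<Union>\<tau>\<in>{\<tau>. length \<tau> = J}. ?below \<tau> \<times> ?below \<tau>)"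
    by (rule measure_pmf.finite_measure_mono) simp
  also have "\<dots> \<le> (\<Sum>\<tau>\<in>{\<tau>. length \<tau> = J}. measure_pmf.prob ?Q (?below \<tau> \<times> ?below \<tau>))"
    by (rule measure_pmf.finite_measure_subadditive_finite) (simp_all add: finite_level)
  also have "\<dots> \<le> (\<Sum>\<tau>\<in>{\<tau> :: bool list. length \<tau> = J}. (1/2) ^ J * (1/2) ^ J)"
  proof (rule sum_mono)
    fix \<tau> :: "bool list" assume "\<tau> \<in> {\<tau>. length \<tau> = J}"
    then show "measure_pmf.prob ?Q (?below \<tau> \<times> ?below \<tau>) \<le> (1/2) ^ J * (1/2) ^ J"
      using prob_level_unif_prefix_le[of k \<tau>]
      by (simp add: measure_pmf_prob_product mult_mono)
  qed
  also have "\<dots> = (1/2) ^ J"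
    by (simp add: card_level power_one_over)
  finally show ?thesis .
qed

lemma prob_mrca_deviation_le:
  fixes Y :: "bool list \<Rightarrow> 'a \<Rightarrow> 'e::polish_space" and k :: nat
  assumes "prob_space M" and Y: "\<And>\<sigma>. Y \<sigma> \<in> borel_measurable M"
    and shallow: "\<And>\<sigma>. length \<sigma> \<le> Suc J \<Longrightarrow> \<sigma> \<in> set ss"
  defines "Q \<equiv> M \<Otimes>\<^sub>M measure_pmf (pair_pmf (level_unif k) (level_unif k))"
  shows "measure Q {z \<in> space Q.
           let \<omega> = fst z; v = longest_common_prefix (fst (snd z)) (snd (snd z))
           in dist (Y v \<omega>) x > \<epsilon> \<or> dist (Y (v @ [False]) \<omega>) x > \<epsilon> \<or> dist (Y (v @ [True]) \<omega>) x > \<epsilon>}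
    \<le> measure M {\<omega> \<in> space M. \<exists>\<sigma>\<in>set ss. dist (Y \<sigma> \<omega>) x > \<epsilon>} + (1/2) ^ J"
    (is "measure Q ?B \<le> measure M ?S + _")
proof -
  let ?q = "pair_pmf (level_unif k) (level_unif k)"
  let ?deep = "{s. J \<le> length (longest_common_prefix (fst s) (snd s))}"
  interpret M: prob_space M by fact
  interpret Q: prob_space Q
    unfolding Q_def by (rule prob_space_pair[OF assms(1) prob_space_measure_pmf])
  have [measurable]: "Y \<sigma> \<in> borel_measurable M" for \<sigma>
    by (rule Y)
  have "?S \<in> sets M"
    by measurable
  have "?B \<subseteq> (?S \<times> UNIV) \<union> (space M \<times> ?deep)"
    using shallow by (force simp: Q_def space_pair_measure Let_def not_le)
  then have "measure Q ?B \<le> measure Q ((?S \<times> UNIV) \<union> (space M \<times> ?deep))"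
    using \<open>?S \<in> sets M\<close> by (intro Q.finite_measure_mono) (simp_all add: Q_def)
  also have "\<dots> \<le> measure Q (?S \<times> UNIV) + measure Q (space M \<times> ?deep)"
    using \<open>?S \<in> sets M\<close> by (intro measure_Un_le) (simp_all add: Q_def)
  also have "\<dots> = measure M ?S + measure_pmf.prob ?q ?deep"
    using measure_pair_measure_Times[OF prob_space_imp_sigma_finite[OF prob_space_measure_pmf[of ?q]]
        \<open>?S \<in> sets M\<close>, of UNIV]
      measure_pair_measure_Times[OF prob_space_imp_sigma_finite[OF prob_space_measure_pmf[of ?q]]
        sets.top[of M], of ?deep]
    by (simp add: Q_def M.prob_space)
  also have "\<dots> \<le> measure M ?S + (1/2) ^ J"
    using prob_lcp_length_ge_le by simp
  finally show ?thesis .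
qed

lemma mrca_deviation_tendsto_0:
  fixes X :: "nat \<Rightarrow> bool list \<Rightarrow> 'a \<Rightarrow> 'e::polish_space" and k :: "nat \<Rightarrow> nat"
  assumes M: "\<And>n. n \<ge> 1 \<Longrightarrow> prob_space (M n)"
    and X: "\<And>n \<sigma>. n \<ge> 1 \<Longrightarrow> X n \<sigma> \<in> borel_measurable (M n)"
    and fixed_vertices: "\<And>ss. (\<lambda>n. measure (M n) {\<omega> \<in> space (M n). \<exists>\<sigma>\<in>set ss. dist (X n \<sigma> \<omega>) x > \<epsilon>}) \<longlonglongrightarrow> 0"
  shows "(\<lambda>n. let Q = M n \<Otimes>\<^sub>M measure_pmf (pair_pmf (level_unif (k n)) (level_unif (k n)))
            in measure Q {z \<in> space Q.
                 let \<omega> = fst z; v = longest_common_prefix (fst (snd z)) (snd (snd z))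
                 in dist (X n v \<omega>) x > \<epsilon> \<or> dist (X n (v @ [False]) \<omega>) x > \<epsilon>
                    \<or> dist (X n (v @ [True]) \<omega>) x > \<epsilon>}) \<longlonglongrightarrow> 0"
proof (rule tendstoI)
  fix \<eta> :: real assume "\<eta> > 0"
  obtain J where J: "(1/2::real) ^ J < \<eta> / 2"
    using real_arch_pow_inv[of "\<eta> / 2" "1/2"] \<open>\<eta> > 0\<close> by auto
  obtain ss where ss: "set ss = {\<sigma> :: bool list. length \<sigma> \<le> Suc J}"
    using finite_list[OF finite_lists_length_le[of "UNIV :: bool set" "Suc J"]] by auto
  have "eventually (\<lambda>n. measure (M n) {\<omega> \<in> space (M n). \<exists>\<sigma>\<in>set ss. dist (X n \<sigma> \<omega>) x > \<epsilon>} < \<eta> / 2) sequentially"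
    by (rule order_tendstoD(2)[OF fixed_vertices]) (use \<open>\<eta> > 0\<close> in simp)
  then show "eventually (\<lambda>n. dist (let Q = M n \<Otimes>\<^sub>M measure_pmf (pair_pmf (level_unif (k n)) (level_unif (k n)))
            in measure Q {z \<in> space Q.
                 let \<omega> = fst z; v = longest_common_prefix (fst (snd z)) (snd (snd z))
                 in dist (X n v \<omega>) x > \<epsilon> \<or> dist (X n (v @ [False]) \<omega>) x > \<epsilon>
                    \<or> dist (X n (v @ [True]) \<omega>) x > \<epsilon>}) 0 < \<eta>) sequentially"
    using eventually_ge_at_top[of 1]
  proof eventually_elim
    case (elim n)
    have Xn: "\<And>\<sigma>. X n \<sigma> \<in> borel_measurable (M n)"
      using X \<open>n \<ge> 1\<close> .
    have shallow: "\<And>\<sigma>. length \<sigma> \<le> Suc J \<Longrightarrow> \<sigma> \<in> set ss"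
      by (simp add: ss)
    show ?case
      using prob_mrca_deviation_le[where Y="X n" and J=J and ss=ss and k="k n" and x=x and \<epsilon>=\<epsilon>,
          OF M[OF \<open>n \<ge> 1\<close>] Xn shallow]
        elim J by (simp add: Let_def)
  qed
qed

theorem lemma4p1:
  fixes M :: "nat \<Rightarrow> 'a measure"
    and X :: "nat \<Rightarrow> bool list \<Rightarrow> 'a \<Rightarrow> 'e::polish_space"
    and p :: "nat \<Rightarrow> 'e \<Rightarrow> ('e \<times> 'e) measure"
    and N :: "'b measure"
    and R :: "'b \<Rightarrow> real \<Rightarrow> 'e"
    and x :: 'e
  assumes markov: "\<And>n. n \<ge> 1 \<Longrightarrow> tree_markov (M n) (X n) (p n)"
    and N_prob: "prob_space N"
    and R_meas: "\<And>t. (\<lambda>\<omega>. R \<omega> t) \<in> borel_measurable N"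
    and R_cadlag: "\<And>\<omega>. \<omega> \<in> space N \<Longrightarrow> cadlag (R \<omega>)"
    and R_init: "AE \<omega> in N. R \<omega> 0 = x"
    and conv: "weak_conv_D (\<lambda>n. M n \<Otimes>\<^sub>M coin_measure) (\<lambda>n. rescaled n (assoc_chain (X n))) N R"
  shows "(\<forall>(ss :: bool list list) \<epsilon>. \<epsilon> > 0 \<longrightarrow>
           (\<lambda>n. measure (M n) {\<omega> \<in> space (M n). \<exists>\<sigma>\<in>set ss. dist (X n \<sigma> \<omega>) x > \<epsilon>}) \<longlonglongrightarrow> 0)
       \<and> (\<forall>t::real. t > 0 \<longrightarrow> (\<forall>\<epsilon>>0.
           (\<lambda>n. let k = nat \<lfloor>real n * t\<rfloor>;
                    Q = M n \<Otimes>\<^sub>M measure_pmf (pair_pmf (level_unif k) (level_unif k))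
                in measure Q {z \<in> space Q.
                     let \<omega> = fst z; v = longest_common_prefix (fst (snd z)) (snd (snd z))
                     in dist (X n v \<omega>) x > \<epsilon> \<or> dist (X n (v @ [False]) \<omega>) x > \<epsilon>
                        \<or> dist (X n (v @ [True]) \<omega>) x > \<epsilon>}) \<longlonglongrightarrow> 0))"
proof -
  have M: "prob_space (M n)" and X: "X n \<sigma> \<in> borel_measurable (M n)" if "n \<ge> 1" for n \<sigma>
    using markov[OF that] by (simp_all add: tree_markov_def)
  have fixed_vertices: "(\<lambda>n. measure (M n) {\<omega> \<in> space (M n). \<exists>\<sigma>\<in>set ss. dist (X n \<sigma> \<omega>) x > \<epsilon>}) \<longlonglongrightarrow> 0"
    if "\<epsilon> > 0" for ss \<epsilon>
    using vertex_deviation_tendsto_0[OF M X N_prob R_cadlag R_init conv that] .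
  show ?thesis
    unfolding Let_def
    by (intro conjI allI impI fixed_vertices mrca_deviation_tendsto_0[OF M X fixed_vertices, unfolded Let_def])
qed

end
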